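(* Let $\mathcal P=(S_1,\dots,S_n)$ be a partition of $V(G)$ into sets of size $r$ and $T=T_{\vec B,\mathcal P}$. For every $j\in\{1,\dots,n\}$ and $v\in S_j$, with $\xi_v=\sigma_T(v)f_v(T\cap\mathcal N(v))$, $$\big|\mathbb E\big[\xi_v\mid B_1,\dots,B_{j-1},B_{j+1},\dots,B_n\big]\big|\le\frac{pq}{r(r-1)}\sum_{w\in S_j\setminus\{v\}}W_v(w).$$
   Context: Let $n,p,q$ be positive integers, $r=p+q$, $G$ a finite simple graph with $|V(G)|=rn$; $\mathcal N(v)$ neighbor set. For each $v$, $f_v:2^{\mathcal N(v)}\to\mathbb R$ with $f_v(\emptyset)=0$. $\sigma_T(v)=q$ if $v\in T$, $-p$ otherwise. Weight of $w$ on $v$: $W_v(w)=\sup_{A\subseteq\mathcal N(v)\setminus\{w\}}|f_v(A)-f_v(A\cup\{w\})|$ if $w\in\mathcal N(v)$, and $0$ otherwise. Restricted randomization: $S_i=\{w_i^1,\dots,w_i^r\}$, $B_1,\dots,B_n$ i.i.d. uniform $p$-subsets of $\{1,\dots,r\}$, $T_{\vec B,\mathcal P}=\{w_i^j:j\in B_i\}$. *)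

theory Defs
  imports "HOL-Probability.Probability"
begin

definition simple_graph :: "'a set \<Rightarrow> ('a \<Rightarrow> 'a \<Rightarrow> bool) \<Rightarrow> bool" where
  "simple_graph V E \<longleftrightarrow> finite V \<and> (\<forall>u v. E u v \<longrightarrow> u \<in> V \<and> v \<in> V)
     \<and> (\<forall>u v. E u v \<longrightarrow> E v u) \<and> (\<forall>u. \<not> E u u)"

definition nbhd :: "('a \<Rightarrow> 'a \<Rightarrow> bool) \<Rightarrow> 'a \<Rightarrow> 'a set" where
  "nbhd E v = {u. E v u}"

definition sigma :: "nat \<Rightarrow> nat \<Rightarrow> 'a set \<Rightarrow> 'a \<Rightarrow> real" where
  "sigma p q T v = (if v \<in> T then real q else - real p)"

definition weight :: "('a \<Rightarrow> 'a \<Rightarrow> bool) \<Rightarrow> ('a \<Rightarrow> 'a set \<Rightarrow> real) \<Rightarrow> 'a \<Rightarrow> 'a \<Rightarrow> real" where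
  "weight E f v w = (if w \<in> nbhd E v
      then (SUP A \<in> Pow (nbhd E v - {w}). \<bar>f v A - f v (A \<union> {w})\<bar>)
      else 0)"

(* T_{B,P} = { w_i^j : j in B_i }, for the labelled partition w i j, i in {1..n}, j in {1..r} *)
definition restr_T :: "nat \<Rightarrow> (nat \<Rightarrow> nat \<Rightarrow> 'a) \<Rightarrow> (nat \<Rightarrow> nat set) \<Rightarrow> 'a set" where
  "restr_T n w B = {w i k | i k. i \<in> {1..n} \<and> k \<in> B i}"

definition psubsets :: "nat \<Rightarrow> nat \<Rightarrow> nat set set" where
  "psubsets r p = {X. X \<subseteq> {1..r} \<and> card X = p}"

end

(* Conditionally on the other blocks, T = T0 \<union> w j ` X, where T0 is the part of T outside
   block j and X is a uniform p-subset of {1..r}.  Write v = w j k0 and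
   G Y = f v ((T0 \<union> w j ` Y) \<inter> N(v)); since v \<notin> N(v), the integrand is \<sigma>(X) G (X - {k0}).
   Summed over X this equals the sum of the increments G Y - G (insert y Y) over the pairs
   (Y, y) with |Y| = p - 1 and y \<notin> Y \<union> {k0}: a set Y \<union> {k0} has q non-members, and a p-set
   avoiding k0 arises from exactly p such pairs.  Each increment is at most W_v(w j y), each y
   lies in C(r-2, p-1) pairs, and C(r-2, p-1) / C(r, p) = pq / (r(r-1)). *)

theory Submission
  imports Defs
begin

lemma sum_subsets_insert:
  assumes "finite A" "a \<notin> A"
  shows "(\<Sum>X\<in>{X. X \<subseteq> insert a A \<and> card X = Suc k}. F X)
    = (\<Sum>Y\<in>{Y. Y \<subseteq> A \<and> card Y = k}. F (insert a Y)) + (\<Sum>Z\<in>{Z. Z \<subseteq> A \<and> card Z = Suc k}. F Z)"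
proof -
  let ?With = "insert a ` {Y. Y \<subseteq> A \<and> card Y = k}"
  let ?Without = "{Z. Z \<subseteq> A \<and> card Z = Suc k}"
  have fin: "finite {Y. Y \<subseteq> A \<and> card Y = m}" for m
    using assms(1) by simp
  have "{X. X \<subseteq> insert a A \<and> card X = Suc k} = ?With \<union> ?Without"
  proof (intro equalityI subsetI)
    fix X assume X: "X \<in> {X. X \<subseteq> insert a A \<and> card X = Suc k}"
    show "X \<in> ?With \<union> ?Without"
    proof (cases "a \<in> X")
      case True
      have "X - {a} \<subseteq> A"
        using X by blast
      moreover have "card (X - {a}) = k"
        using X True by (simp add: card_Diff_singleton)
      ultimately have "X - {a} \<in> {Y. Y \<subseteq> A \<and> card Y = k}"
        by blast
      moreover have "X = insert a (X - {a})"
        using True by blast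
      ultimately show ?thesis
        by blast
    next
      case False
      then show ?thesis
        using X by blast
    qed
  next
    fix X assume "X \<in> ?With \<union> ?Without"
    then show "X \<in> {X. X \<subseteq> insert a A \<and> card X = Suc k}"
    proof
      assume "X \<in> ?With"
      then obtain Y where Y: "Y \<subseteq> A" "card Y = k" "X = insert a Y"
        by blast
      moreover have "finite Y" "a \<notin> Y"
        using assms Y(1) finite_subset by auto
      ultimately show ?thesis
        by auto
    qed auto
  qed
  moreover have "?With \<inter> ?Without = {}"
    using assms(2) by auto
  ultimately have "(\<Sum>X\<in>{X. X \<subseteq> insert a A \<and> card X = Suc k}. F X)
      = (\<Sum>X\<in>?With. F X) + (\<Sum>Z\<in>?Without. F Z)"
    using fin by (simp add: sum.union_disjoint)
  moreover have "inj_on (insert a) {Y. Y \<subseteq> A \<and> card Y = k}"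
  proof (rule inj_onI)
    fix Y Y' assume "Y \<in> {Y. Y \<subseteq> A \<and> card Y = k}" "Y' \<in> {Y. Y \<subseteq> A \<and> card Y = k}"
      and "insert a Y = insert a Y'"
    then show "Y = Y'"
      using assms(2) insert_ident[of a Y Y'] by blast
  qed
  ultimately show ?thesis
    by (simp add: sum.reindex)
qed

lemma sum_subset_element_pairs:
  assumes "finite A"
  shows "(\<Sum>Z\<in>{Z. Z \<subseteq> A \<and> card Z = Suc k}. \<Sum>y\<in>Z. g Z y)
    = (\<Sum>Y\<in>{Y. Y \<subseteq> A \<and> card Y = k}. \<Sum>y\<in>A - Y. g (insert y Y) y)"
proof -
  have fin: "finite {Y. Y \<subseteq> A \<and> card Y = m}" for m
    using assms by (simp add: finite_subset)
  have "(\<Sum>Z\<in>{Z. Z \<subseteq> A \<and> card Z = Suc k}. \<Sum>y\<in>Z. g Z y)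
      = (\<Sum>(Z, y)\<in>Sigma {Z. Z \<subseteq> A \<and> card Z = Suc k} (\<lambda>Z. Z). g Z y)"
    using fin assms by (subst sum.Sigma) (auto intro: finite_subset)
  also have "\<dots> = (\<Sum>(Y, y)\<in>Sigma {Y. Y \<subseteq> A \<and> card Y = k} (\<lambda>Y. A - Y). g (insert y Y) y)"
    by (rule sum.reindex_bij_witness[where i = "\<lambda>(Y, y). (insert y Y, y)" and j = "\<lambda>(Z, y). (Z - {y}, y)"])
       (use assms finite_subset in \<open>auto simp: card_insert_disjoint card_Diff_singleton_if insert_absorb\<close>)
  also have "\<dots> = (\<Sum>Y\<in>{Y. Y \<subseteq> A \<and> card Y = k}. \<Sum>y\<in>A - Y. g (insert y Y) y)"
    using fin assms by (subst sum.Sigma) auto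
  finally show ?thesis .
qed

lemma sum_subsets_complement:
  fixes h :: "'a \<Rightarrow> 'b::comm_semiring_1"
  assumes "finite A"
  shows "(\<Sum>Y\<in>{Y. Y \<subseteq> A \<and> card Y = k}. \<Sum>y\<in>A - Y. h y)
    = of_nat (card A - 1 choose k) * (\<Sum>y\<in>A. h y)"
proof -
  have fin: "finite {Y. Y \<subseteq> A \<and> card Y = k}"
    using assms by (simp add: finite_subset)
  have "(\<Sum>Y\<in>{Y. Y \<subseteq> A \<and> card Y = k}. \<Sum>y\<in>A - Y. h y)
      = (\<Sum>Y\<in>{Y. Y \<subseteq> A \<and> card Y = k}. \<Sum>y\<in>{y. y \<in> A \<and> y \<notin> Y}. h y)"
    by (intro sum.cong) auto
  also have "\<dots> = (\<Sum>y\<in>A. \<Sum>Y\<in>{Y. Y \<in> {Y. Y \<subseteq> A \<and> card Y = k} \<and> y \<notin> Y}. h y)"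
    using fin assms by (rule sum.swap_restrict)
  also have "\<dots> = (\<Sum>y\<in>A. \<Sum>Y\<in>{Y. Y \<subseteq> A - {y} \<and> card Y = k}. h y)"
    by (intro sum.cong) auto
  also have "\<dots> = (\<Sum>y\<in>A. of_nat (card A - 1 choose k) * h y)"
    using assms by (intro sum.cong) (simp_all add: n_subsets)
  finally show ?thesis
    by (simp add: sum_distrib_left)
qed

lemma binomial_mult_Suc_Suc:
  fixes a b :: nat
  shows "(a + b choose a) * (Suc (Suc (a + b)) * Suc (a + b))
    = Suc a * Suc b * (Suc (Suc (a + b)) choose Suc a)"
proof -
  have absorb_a: "Suc a * (Suc (Suc (a + b)) choose Suc a) = Suc (Suc (a + b)) * (Suc (a + b) choose a)"
    by (rule Suc_times_binomial)
  have absorb_b: "Suc b * (Suc (a + b) choose a) = Suc (a + b) * (a + b choose a)"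
    using binomial_absorb_comp[of "Suc (a + b)" a] by (simp add: Suc_diff_le)
  have "Suc a * Suc b * (Suc (Suc (a + b)) choose Suc a) = Suc b * (Suc a * (Suc (Suc (a + b)) choose Suc a))"
    by (simp only: ac_simps)
  also have "\<dots> = Suc (Suc (a + b)) * (Suc b * (Suc (a + b) choose a))"
    unfolding absorb_a by (simp only: ac_simps)
  also have "\<dots> = (a + b choose a) * (Suc (Suc (a + b)) * Suc (a + b))"
    unfolding absorb_b by (simp only: ac_simps)
  finally show ?thesis ..
qed

lemma binomial_pred_pred_ratio:
  fixes p q :: nat
  assumes "p > 0" "q > 0"
  shows "real (p + q - 2 choose (p - 1)) / real (p + q choose p)
    = real p * real q / (real (p + q) * (real (p + q) - 1))"
proof -
  obtain a b where "p = Suc a" "q = Suc b"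
    using assms gr0_implies_Suc by metis
  then have "real (p + q - 2 choose (p - 1)) * (real (p + q) * (real (p + q) - 1))
      = real p * real q * real (p + q choose p)"
    using arg_cong[OF binomial_mult_Suc_Suc[of a b], of real] by (simp add: algebra_simps)
  moreover have "real (p + q choose p) > 0" "real (p + q) * (real (p + q) - 1) > 0"
    using assms by simp_all
  ultimately show ?thesis
    by (simp add: field_simps)
qed

lemma signed_subset_sum_eq_increments:
  fixes G :: "'a set \<Rightarrow> real"
  assumes "finite A" "a \<notin> A" "card A = k + q"
  shows "(\<Sum>X\<in>{X. X \<subseteq> insert a A \<and> card X = Suc k}.
            (if a \<in> X then real q else - real (Suc k)) * G (X - {a}))
    = (\<Sum>Y\<in>{Y. Y \<subseteq> A \<and> card Y = k}. \<Sum>y\<in>A - Y. G Y - G (insert y Y))"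
proof -
  let ?Sub = "\<lambda>m. {Y. Y \<subseteq> A \<and> card Y = m}"
  let ?F = "\<lambda>X. (if a \<in> X then real q else - real (Suc k)) * G (X - {a})"
  have "(\<Sum>Y\<in>?Sub k. ?F (insert a Y)) = (\<Sum>Y\<in>?Sub k. \<Sum>y\<in>A - Y. G Y)"
  proof (intro sum.cong refl)
    fix Y assume Y: "Y \<in> ?Sub k"
    then have "a \<notin> Y"
      using assms(2) by blast
    moreover have "card (A - Y) = q"
      using Y assms(3) by (simp add: card_Diff_subset rev_finite_subset[OF assms(1)])
    ultimately show "?F (insert a Y) = (\<Sum>y\<in>A - Y. G Y)"
      by simp
  qed
  moreover have "(\<Sum>Z\<in>?Sub (Suc k). ?F Z) = - (\<Sum>Z\<in>?Sub (Suc k). \<Sum>y\<in>Z. G Z)"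
    using assms(2) by (simp add: sum_negf[symmetric]) (intro sum.cong, auto simp: algebra_simps)
  ultimately show ?thesis
    unfolding sum_subsets_insert[OF assms(1,2)] sum_subset_element_pairs[OF assms(1)]
    by (simp add: sum_subtractf)
qed

lemma abs_signed_subset_sum_le:
  fixes G :: "'a set \<Rightarrow> real"
  assumes "finite A" "a \<notin> A" "card A = p + q - 1" "p > 0"
    and increments: "\<And>Y y. Y \<subseteq> A \<Longrightarrow> y \<in> A - Y \<Longrightarrow> \<bar>G Y - G (insert y Y)\<bar> \<le> W y"
  shows "\<bar>\<Sum>X\<in>{X. X \<subseteq> insert a A \<and> card X = p}. (if a \<in> X then real q else - real p) * G (X - {a})\<bar>
    \<le> real (p + q - 2 choose (p - 1)) * (\<Sum>y\<in>A. W y)"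
proof -
  obtain k where p: "p = Suc k"
    using assms(4) gr0_implies_Suc by blast
  let ?Sub = "{Y. Y \<subseteq> A \<and> card Y = k}"
  have "\<bar>\<Sum>X\<in>{X. X \<subseteq> insert a A \<and> card X = p}. (if a \<in> X then real q else - real p) * G (X - {a})\<bar>
      = \<bar>\<Sum>Y\<in>?Sub. \<Sum>y\<in>A - Y. G Y - G (insert y Y)\<bar>"
    unfolding p using signed_subset_sum_eq_increments[OF assms(1,2), of k q G] assms(3) p by simp
  also have "\<dots> \<le> (\<Sum>Y\<in>?Sub. \<Sum>y\<in>A - Y. \<bar>G Y - G (insert y Y)\<bar>)"
    by (rule order.trans[OF sum_abs sum_mono[OF sum_abs]])
  also have "\<dots> \<le> (\<Sum>Y\<in>?Sub. \<Sum>y\<in>A - Y. W y)"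
    using increments by (intro sum_mono) auto
  also have "\<dots> = real (p + q - 2 choose (p - 1)) * (\<Sum>y\<in>A. W y)"
    using sum_subsets_complement[OF assms(1)] assms(3) p by simp
  finally show ?thesis .
qed

lemma subsets_card_finite_nonempty:
  assumes "finite R" "p \<le> card R"
  shows "finite {X. X \<subseteq> R \<and> card X = p}" "{X. X \<subseteq> R \<and> card X = p} \<noteq> {}"
proof -
  have "card {X. X \<subseteq> R \<and> card X = p} > 0"
    using n_subsets[OF assms(1)] assms(2) by simp
  then show "finite {X. X \<subseteq> R \<and> card X = p}" "{X. X \<subseteq> R \<and> card X = p} \<noteq> {}"
    by (simp_all add: card_gt_0_iff)
qed

lemma expectation_pmf_of_set_cong:
  fixes f g :: "'a \<Rightarrow> real"
  assumes "finite S" "S \<noteq> {}" "\<And>x. x \<in> S \<Longrightarrow> f x = g x"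
  shows "measure_pmf.expectation (pmf_of_set S) f = measure_pmf.expectation (pmf_of_set S) g"
proof -
  have "sum f S = sum g S"
    using assms(3) by (rule sum.cong[OF refl])
  then show ?thesis
    using assms(1,2) by (simp add: integral_pmf_of_set)
qed

lemma abs_expectation_signed_subset_le:
  fixes G :: "'a set \<Rightarrow> real"
  assumes "finite R" "a \<in> R" "card R = p + q" "p > 0" "q > 0"
    and "\<And>Y y. Y \<subseteq> R - {a} \<Longrightarrow> y \<in> R - {a} - Y \<Longrightarrow> \<bar>G Y - G (insert y Y)\<bar> \<le> W y"
  shows "\<bar>measure_pmf.expectation (pmf_of_set {X. X \<subseteq> R \<and> card X = p})
      (\<lambda>X. (if a \<in> X then real q else - real p) * G (X - {a}))\<bar>
    \<le> real p * real q / (real (p + q) * (real (p + q) - 1)) * (\<Sum>y\<in>R - {a}. W y)"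
proof -
  let ?P = "{X. X \<subseteq> R \<and> card X = p}"
  let ?S = "\<Sum>X\<in>?P. (if a \<in> X then real q else - real p) * G (X - {a})"
  have "finite ?P" "?P \<noteq> {}"
    using subsets_card_finite_nonempty[OF assms(1)] assms(3) by simp_all
  then have "measure_pmf.expectation (pmf_of_set ?P) (\<lambda>X. (if a \<in> X then real q else - real p) * G (X - {a}))
      = ?S / real (p + q choose p)"
    using n_subsets[OF assms(1)] assms(3) by (simp add: integral_pmf_of_set)
  also have "\<bar>\<dots>\<bar> = \<bar>?S\<bar> / real (p + q choose p)"
    by simp
  also have "\<dots> \<le> real (p + q - 2 choose (p - 1)) * (\<Sum>y\<in>R - {a}. W y) / real (p + q choose p)"
    using abs_signed_subset_sum_le[of "R - {a}" a p q G W] assms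
    by (intro divide_right_mono) (simp_all add: insert_absorb)
  also have "\<dots> = real p * real q / (real (p + q) * (real (p + q) - 1)) * (\<Sum>y\<in>R - {a}. W y)"
    unfolding times_divide_eq_left[symmetric] binomial_pred_pred_ratio[OF assms(4,5)] ..
  finally show ?thesis .
qed

lemma finite_nbhd: "simple_graph V E \<Longrightarrow> finite (nbhd E v)"
  unfolding simple_graph_def nbhd_def by (auto intro: finite_subset)

lemma not_in_nbhd_self: "simple_graph V E \<Longrightarrow> v \<notin> nbhd E v"
  unfolding simple_graph_def nbhd_def by auto

lemma abs_diff_le_weight:
  assumes "finite (nbhd E v)" "u \<notin> S"
  shows "\<bar>f v (S \<inter> nbhd E v) - f v (insert u S \<inter> nbhd E v)\<bar> \<le> weight E f v u"
proof (cases "u \<in> nbhd E v")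
  case True
  then have "insert u S \<inter> nbhd E v = (S \<inter> nbhd E v) \<union> {u}"
    by auto
  moreover have "S \<inter> nbhd E v \<in> Pow (nbhd E v - {u})"
    using assms(2) by auto
  moreover have "bdd_above ((\<lambda>A. \<bar>f v A - f v (A \<union> {u})\<bar>) ` Pow (nbhd E v - {u}))"
    using assms(1) by (intro bdd_above_finite) simp
  ultimately show ?thesis
    using True by (auto simp: weight_def intro!: cSUP_upper)
next
  case False
  then have "insert u S \<inter> nbhd E v = S \<inter> nbhd E v"
    by auto
  then show ?thesis
    using False by (simp add: weight_def)
qed

lemma restr_T_update:
  "j \<in> {1..n} \<Longrightarrow> restr_T n w (B(j := X)) = restr_T n w (B(j := {})) \<union> w j ` X"
  unfolding restr_T_def by auto

lemma block_structure:
  assumes "bij_betw (\<lambda>(i, k). w i k) ({1..n} \<times> {1..r}) V" "j \<in> {1..n}"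
    and "\<forall>i\<in>{1..n} - {j}. B i \<in> psubsets r p"
  shows "inj_on (w j) {1..r}" "\<forall>y\<in>{1..r}. w j y \<notin> restr_T n w (B(j := {}))"
proof -
  have inj: "inj_on (\<lambda>(i, k). w i k) ({1..n} \<times> {1..r})"
    using assms(1) by (rule bij_betw_imp_inj_on)
  show "inj_on (w j) {1..r}"
  proof (rule inj_onI)
    fix x y assume "x \<in> {1..r}" "y \<in> {1..r}" "w j x = w j y"
    then show "x = y"
      using inj_onD[OF inj, of "(j, x)" "(j, y)"] assms(2) by auto
  qed
  show "\<forall>y\<in>{1..r}. w j y \<notin> restr_T n w (B(j := {}))"
  proof (intro ballI notI)
    fix y assume y: "y \<in> {1..r}" and "w j y \<in> restr_T n w (B(j := {}))"
    then obtain i k where i: "i \<in> {1..n} - {j}" "k \<in> B i" "w j y = w i k"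
      unfolding restr_T_def by (auto split: if_splits)
    moreover have "k \<in> {1..r}"
      using assms(3) i(1,2) unfolding psubsets_def by blast
    ultimately show False
      using inj_onD[OF inj, of "(j, y)" "(i, k)"] assms(2) y by auto
  qed
qed

lemma sigma_mult_block_eq:
  assumes "g k \<notin> nbhd E (g k)" "inj_on g R" "k \<in> R" "X \<subseteq> R" "g k \<notin> T0"
  shows "sigma p q (T0 \<union> g ` X) (g k) * f (g k) ((T0 \<union> g ` X) \<inter> nbhd E (g k))
    = (if k \<in> X then real q else - real p) * f (g k) ((T0 \<union> g ` (X - {k})) \<inter> nbhd E (g k))"
proof -
  have "g k \<in> T0 \<union> g ` X \<longleftrightarrow> k \<in> X"
    using assms(5) inj_on_image_mem_iff[OF assms(2,3,4)] by blast
  moreover have "(T0 \<union> g ` X) \<inter> nbhd E (g k) = (T0 \<union> g ` (X - {k})) \<inter> nbhd E (g k)"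
    using assms(1) by auto
  ultimately show ?thesis
    by (simp add: sigma_def)
qed

lemma expectation_restr_T_block:
  assumes "simple_graph V E" "j \<in> {1..n}" "inj_on (w j) {1..r}"
    and "\<forall>y\<in>{1..r}. w j y \<notin> restr_T n w (B(j := {}))" "k \<in> {1..r}" "v = w j k" "p \<le> r"
  shows "measure_pmf.expectation (pmf_of_set (psubsets r p))
      (\<lambda>X. let T = restr_T n w (B(j := X)) in sigma p q T v * f v (T \<inter> nbhd E v))
    = measure_pmf.expectation (pmf_of_set {X. X \<subseteq> {1..r} \<and> card X = p})
      (\<lambda>X. (if k \<in> X then real q else - real p)
        * f v ((restr_T n w (B(j := {})) \<union> w j ` (X - {k})) \<inter> nbhd E v))"
proof -
  have "finite (psubsets r p)" "psubsets r p \<noteq> {}"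
    using subsets_card_finite_nonempty[of "{1..r}" p] assms(7) by (simp_all add: psubsets_def)
  moreover have "(let T = restr_T n w (B(j := X)) in sigma p q T v * f v (T \<inter> nbhd E v))
      = (if k \<in> X then real q else - real p)
        * f v ((restr_T n w (B(j := {})) \<union> w j ` (X - {k})) \<inter> nbhd E v)"
    if "X \<in> psubsets r p" for X
    \<comment> \<open>instantiated, since the rule loops when its right side is matched with X = {}\<close>
    unfolding Let_def restr_T_update[OF assms(2), of w B X] assms(6)
  proof (rule sigma_mult_block_eq[OF _ assms(3,5)])
    show "w j k \<notin> nbhd E (w j k)"
      using not_in_nbhd_self[OF assms(1)] .
    show "X \<subseteq> {1..r}"
      using that by (simp add: psubsets_def)
    show "w j k \<notin> restr_T n w (B(j := {}))"
      using assms(4,5) by blast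
  qed
  ultimately show ?thesis
    unfolding psubsets_def[symmetric] by (rule expectation_pmf_of_set_cong)
qed

theorem mainTheorem15:
  fixes V :: "'a set" and E :: "'a \<Rightarrow> 'a \<Rightarrow> bool"
    and f :: "'a \<Rightarrow> 'a set \<Rightarrow> real"
    and n p q r :: nat
    and w :: "nat \<Rightarrow> nat \<Rightarrow> 'a"
    and B :: "nat \<Rightarrow> nat set"
    and j :: nat and v :: 'a
  assumes "n > 0" and "p > 0" and "q > 0" and "r = p + q"
    and "simple_graph V E"
    and "card V = r * n"
    and "\<forall>u\<in>V. f u {} = 0"
    and "bij_betw (\<lambda>(i, k). w i k) ({1..n} \<times> {1..r}) V"
    and "j \<in> {1..n}"
    and "v \<in> w j ` {1..r}"
    and "\<forall>i\<in>{1..n} - {j}. B i \<in> psubsets r p"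
  shows "\<bar>measure_pmf.expectation (pmf_of_set (psubsets r p))
            (\<lambda>X. let T = restr_T n w (B(j := X))
                 in sigma p q T v * f v (T \<inter> nbhd E v))\<bar>
         \<le> real p * real q / (real r * (real r - 1))
            * (\<Sum>u \<in> w j ` {1..r} - {v}. weight E f v u)"
proof -
  obtain k0 where k0: "k0 \<in> {1..r}" "v = w j k0"
    using assms(10) by blast
  note block = block_structure[OF assms(8,9,11)]
  define G where "G Y = f v ((restr_T n w (B(j := {})) \<union> w j ` Y) \<inter> nbhd E v)" for Y
  have increments: "\<bar>G Y - G (insert y Y)\<bar> \<le> weight E f v (w j y)"
    if "Y \<subseteq> {1..r} - {k0}" "y \<in> {1..r} - {k0} - Y" for Y y
  proof -
    have "w j y \<notin> restr_T n w (B(j := {})) \<union> w j ` Y"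
      using that block inj_onD[OF block(1)] by blast
    then show ?thesis
      using abs_diff_le_weight[OF finite_nbhd[OF assms(5)]] by (simp add: G_def)
  qed
  have "w j ` {1..r} - {v} = w j ` ({1..r} - {k0})"
    using k0 inj_onD[OF block(1)] by auto
  then have weights: "(\<Sum>u \<in> w j ` {1..r} - {v}. weight E f v u) = (\<Sum>y \<in> {1..r} - {k0}. weight E f v (w j y))"
    using inj_on_diff[OF block(1)] by (simp add: sum.reindex)
  have "p \<le> r"
    using assms(4) by simp
  show ?thesis
    unfolding expectation_restr_T_block[OF assms(5,9) block k0 \<open>p \<le> r\<close>] weights
    using abs_expectation_signed_subset_le[OF _ k0(1) _ assms(2,3) increments] assms(4)
    by (simp add: G_def)
qed

end
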